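(* Let $K=\mathbf R$ or $\mathbf C$, let $V$ be an $n$-dimensional $K$-vector space with nondegenerate symmetric bilinear forms $b_0,b_1$, and let $f=(b_0^\dagger)^{-1}b_1^\dagger$ have a single Jordan block, with eigenvalue $\lambda$. Let $\mathbf e$ be a basis of $V$ and $\varepsilon\in\mathfrak c$ with $[f]_{\mathbf e}=J_n(\lambda)$ and $[b_0]_{\mathbf e}=\varepsilon C_n$. Let $\mathbf v$ be a basis of $V$ and $\eta\in\mathfrak c$ such that, in the dual basis $\mathbf v^*$ of $V^*$, $[b_1^*]_{\mathbf v^*}=\eta C_n$ and $[b_0^*]_{\mathbf v^*}=\eta C_nJ_n(\lambda)$. Let $\Phi$ be the matrix with $\mathbf e=\mathbf v\Phi$. Then: (1) if $K=\mathbf R$, $\varepsilon\eta\lambda>0$; (2) up to sign, $$\Phi=\sqrt{\varepsilon\eta\lambda}\sum_{\ell=0}^{n}a_\ell\lambda^{-\ell}C_nN^\ell,$$ where $\sum_\ell a_\ell t^\ell$ is the Taylor series of $(1+t)^{1/2}$, i.e. $a_\ell=\prod_{j=0}^{\ell-1}(1/2-j)/\ell!$, and $\sqrt{\varepsilon\eta\lambda}$ is a square root of $\varepsilon\eta\lambda$.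
   Context: $\mathfrak c=\{\pm1\}$ if $K=\mathbf R$ and $\mathfrak c=\{1\}$ if $K=\mathbf C$. $b_i^\dagger\colon V\to V^*$, $b_i^\dagger(x)(y)=b_i(x,y)$. The forms $b_i^*$ on $V^*$ are defined by $(b_i^* )^\dagger=(b_i^\dagger)^{-1}$. $C_n=(\delta_{n+1,i+j})$ is the antidiagonal matrix, $N=(\delta_{i+1,j})$ the regular nilpotent matrix, and $J_n(\lambda)=\lambda\mathrm{Id}+N$. *)

theory Defs
  imports "Jordan_Normal_Form.Jordan_Normal_Form"
begin

text \<open>Coordinates: V = K^n with its standard basis, V^* with the standard dual basis.
 A bilinear form b is represented by its Gram matrix B (b(x,y) = x^T B y); the matrix of
 b^dagger : V -> V^* is then B^T (= B for symmetric b), and the form b^* on V^* with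
 (b^*)^dagger = (b^dagger)^{-1} has Gram matrix B^{-1}.  A basis of V is an invertible
 matrix whose columns are the basis vectors.  Indices are 0-based.\<close>

definition antidiag_mat :: "nat \<Rightarrow> 'a::{zero,one} mat" where
  "antidiag_mat n = mat n n (\<lambda>(i,j). if i + j = n - 1 then 1 else 0)"

definition nilp_mat :: "nat \<Rightarrow> 'a::{zero,one} mat" where
  "nilp_mat n = mat n n (\<lambda>(i,j). if Suc i = j then 1 else 0)"

definition sqrt_coeff :: "nat \<Rightarrow> 'a::field_char_0" where
  "sqrt_coeff l = (\<Prod>j<l. (1/2 - of_nat j)) / fact l"

definition phi_sum :: "nat \<Rightarrow> 'a::field_char_0 \<Rightarrow> 'a mat" where
  "phi_sum n lam = mat n n (\<lambda>(i,j). \<Sum>l=0..n.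
      sqrt_coeff l * inverse lam ^ l * (antidiag_mat n * nilp_mat n ^\<^sub>m l) $$ (i,j))"

text \<open>B0, B1: Gram matrices of b0, b1 (symmetric, nondegenerate, with inverses B0i, B1i);
  F: matrix of f = (b0^dagger)^{-1} b1^dagger;
  E: basis e, with [f]_e = J_n(lam) and [b0]_e = eps C_n;
  P: basis v (inverse Q, whose rows are the dual basis v^*), with
     [b1^*]_{v^*} = eta C_n and [b0^*]_{v^*} = eta C_n J_n(lam);
  Phi: the matrix with e = v Phi.\<close>
definition A10_hyps ::
  "nat \<Rightarrow> 'a::field mat \<Rightarrow> 'a mat \<Rightarrow> 'a mat \<Rightarrow> 'a mat \<Rightarrow> 'a mat \<Rightarrow> 'a mat \<Rightarrow> 'a mat
     \<Rightarrow> 'a mat \<Rightarrow> 'a \<Rightarrow> 'a \<Rightarrow> 'a \<Rightarrow> bool" where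
  "A10_hyps n B0 B1 B0i B1i E P Q Phi eps eta lam \<longleftrightarrow>
     0 < n \<and>
     B0 \<in> carrier_mat n n \<and> B1 \<in> carrier_mat n n \<and>
     B0i \<in> carrier_mat n n \<and> B1i \<in> carrier_mat n n \<and>
     E \<in> carrier_mat n n \<and> P \<in> carrier_mat n n \<and> Q \<in> carrier_mat n n \<and>
     Phi \<in> carrier_mat n n \<and>
     transpose_mat B0 = B0 \<and> transpose_mat B1 = B1 \<and>
     B0 * B0i = 1\<^sub>m n \<and> B0i * B0 = 1\<^sub>m n \<and> B1 * B1i = 1\<^sub>m n \<and> B1i * B1 = 1\<^sub>m n \<and>
     invertible_mat E \<and> P * Q = 1\<^sub>m n \<and> Q * P = 1\<^sub>m n \<and>
     E * jordan_block n lam = (B0i * B1) * E \<and>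
     transpose_mat E * B0 * E = eps \<cdot>\<^sub>m antidiag_mat n \<and>
     Q * B1i * transpose_mat Q = eta \<cdot>\<^sub>m antidiag_mat n \<and>
     Q * B0i * transpose_mat Q = eta \<cdot>\<^sub>m (antidiag_mat n * jordan_block n lam) \<and>
     E = P * Phi"

end

theory Submission
  imports Defs "HOL-Computational_Algebra.Formal_Power_Series"
begin

(* Writing the forms b0^* and b1^* in the dual basis v^* through e = v Phi yields the two
   congruences Phi C Phi^T = eps eta C J and Phi^T C Phi = eps eta C J.  Hence G = C Phi and
   C Phi^T multiply, in either order, to eps eta J, so G commutes with J and thus with N: it is an
   upper triangular Toeplitz matrix sum_k g_k N^k.  Such matrices are persymmetric, so C Phi^T = G
   and G^2 = eps eta J.  Comparing coefficients, g_0^2 = eps eta lam, where g_0 <> 0 because Phi is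
   invertible, and the g_k are then forced to be g_0 a_k lam^-k, the coefficients of
   g_0 (1 + t/lam)^(1/2). *)

lemma smult_smult_mat: "a \<cdot>\<^sub>m (b \<cdot>\<^sub>m A) = (a * b :: 'a::semigroup_mult) \<cdot>\<^sub>m A"
  by (rule eq_matI) (auto simp: mult.assoc)

lemma one_smult_mat: "1 \<cdot>\<^sub>m A = (A :: 'a::monoid_mult mat)"
  by (rule eq_matI) auto

lemma invertible_matE:
  assumes "invertible_mat A" "A \<in> carrier_mat n n"
  obtains B where "B \<in> carrier_mat n n" "A * B = 1\<^sub>m n" "B * A = 1\<^sub>m n"
proof -
  obtain B where AB: "A * B = 1\<^sub>m n" and BA: "B * A = 1\<^sub>m (dim_row B)"
    using assms unfolding invertible_mat_def inverts_mat_def by auto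
  have "dim_row B = n" using arg_cong[OF BA, of dim_col] assms(2) by simp
  moreover have "dim_col B = n" using arg_cong[OF AB, of dim_col] by simp
  ultimately show thesis using that AB BA by blast
qed

lemma index_mult_mat_sum:
  assumes "A \<in> carrier_mat n m" "B \<in> carrier_mat m p" "i < n" "j < p"
  shows "(A * B) $$ (i,j) = (\<Sum>k<m. A $$ (i,k) * B $$ (k,j))"
  using assms by (simp add: scalar_prod_def lessThan_atLeast0)

lemma antidiag_mat_carrier [simp]: "antidiag_mat n \<in> carrier_mat n n"
  and dim_row_antidiag_mat [simp]: "dim_row (antidiag_mat n) = n"
  and dim_col_antidiag_mat [simp]: "dim_col (antidiag_mat n) = n"
  by (simp_all add: antidiag_mat_def)

lemma index_antidiag_mat [simp]:
  "i < n \<Longrightarrow> j < n \<Longrightarrow> antidiag_mat n $$ (i,j) = (if i + j = n - 1 then 1 else 0)"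
  by (simp add: antidiag_mat_def)

lemma antidiag_mat_mult_index:
  fixes A :: "'a::comm_ring_1 mat"
  assumes "A \<in> carrier_mat n p" "i < n" "j < p"
  shows "(antidiag_mat n * A) $$ (i,j) = A $$ (n - 1 - i, j)"
proof -
  have "(antidiag_mat n * A) $$ (i,j) = (\<Sum>k<n. antidiag_mat n $$ (i,k) * A $$ (k,j))"
    using assms by (intro index_mult_mat_sum) auto
  also have "\<dots> = (\<Sum>k<n. if k = n - 1 - i then A $$ (k,j) else 0)"
    using assms by (intro sum.cong) auto
  finally show ?thesis using assms by simp
qed

lemma mult_antidiag_mat_index:
  fixes A :: "'a::comm_ring_1 mat"
  assumes "A \<in> carrier_mat p n" "i < p" "j < n"
  shows "(A * antidiag_mat n) $$ (i,j) = A $$ (i, n - 1 - j)"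
proof -
  have "(A * antidiag_mat n) $$ (i,j) = (\<Sum>k<n. A $$ (i,k) * antidiag_mat n $$ (k,j))"
    using assms by (intro index_mult_mat_sum) auto
  also have "\<dots> = (\<Sum>k<n. if k = n - 1 - j then A $$ (i,k) else 0)"
    using assms by (intro sum.cong) auto
  finally show ?thesis using assms by simp
qed

lemma antidiag_mat_squared: "antidiag_mat n * antidiag_mat n = (1\<^sub>m n :: 'a::comm_ring_1 mat)"
  by (rule eq_matI) (auto simp del: index_mult_mat(1) simp: mult_antidiag_mat_index[OF antidiag_mat_carrier])

lemma transpose_antidiag_mat: "transpose_mat (antidiag_mat n) = antidiag_mat n"
  by (rule eq_matI) (auto simp: antidiag_mat_def)

lemma nilp_mat_carrier [simp]: "nilp_mat n \<in> carrier_mat n n"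
  and dim_row_nilp_mat [simp]: "dim_row (nilp_mat n) = n"
  and dim_col_nilp_mat [simp]: "dim_col (nilp_mat n) = n"
  by (simp_all add: nilp_mat_def)

lemma index_nilp_mat [simp]:
  "i < n \<Longrightarrow> j < n \<Longrightarrow> nilp_mat n $$ (i,j) = (if Suc i = j then 1 else 0)"
  by (simp add: nilp_mat_def)

lemma mult_nilp_mat_index:
  fixes A :: "'a::comm_ring_1 mat"
  assumes "A \<in> carrier_mat p n" "i < p" "j < n"
  shows "(A * nilp_mat n) $$ (i,j) = (if 0 < j then A $$ (i, j - 1) else 0)"
proof -
  have "(A * nilp_mat n) $$ (i,j) = (\<Sum>k<n. A $$ (i,k) * nilp_mat n $$ (k,j))"
    using assms by (intro index_mult_mat_sum) auto
  also have "\<dots> = (\<Sum>k<n. if k = j - 1 \<and> 0 < j then A $$ (i,k) else 0)"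
    using assms by (intro sum.cong) auto
  finally show ?thesis using assms by (simp add: sum.delta)
qed

lemma nilp_mat_mult_index:
  fixes A :: "'a::comm_ring_1 mat"
  assumes "A \<in> carrier_mat n p" "i < n" "j < p"
  shows "(nilp_mat n * A) $$ (i,j) = (if Suc i < n then A $$ (Suc i, j) else 0)"
proof -
  have "(nilp_mat n * A) $$ (i,j) = (\<Sum>k<n. nilp_mat n $$ (i,k) * A $$ (k,j))"
    using assms by (intro index_mult_mat_sum) auto
  also have "\<dots> = (\<Sum>k<n. if k = Suc i then A $$ (k,j) else 0)"
    using assms by (intro sum.cong) auto
  finally show ?thesis using assms by simp
qed

lemma jordan_block_eq_smult_one_plus_nilp:
  "jordan_block n lam = lam \<cdot>\<^sub>m 1\<^sub>m n + (nilp_mat n :: 'a::comm_ring_1 mat)"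
  by (rule eq_matI) auto

lemma commute_jordan_block_imp_commute_nilp_mat:
  fixes G :: "'a::comm_ring_1 mat"
  assumes G: "G \<in> carrier_mat n n" and "G * jordan_block n lam = jordan_block n lam * G"
  shows "G * nilp_mat n = nilp_mat n * G"
proof -
  have eq: "lam \<cdot>\<^sub>m G + G * nilp_mat n = lam \<cdot>\<^sub>m G + nilp_mat n * G"
    using assms by (simp add: jordan_block_eq_smult_one_plus_nilp mult_add_distrib_mat[of _ n n _ n]
        add_mult_distrib_mat[of _ n n _ _ n] mult_smult_distrib[of _ n n _ n] mult_smult_assoc_mat[of _ n n _ n])
  show ?thesis
  proof (rule eq_matI)
    fix i j assume "i < dim_row (nilp_mat n * G)" "j < dim_col (nilp_mat n * G)"
    then have "(lam \<cdot>\<^sub>m G + G * nilp_mat n) $$ (i,j) = (lam \<cdot>\<^sub>m G + nilp_mat n * G) $$ (i,j)"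
      by (simp only: eq)
    then show "(G * nilp_mat n) $$ (i,j) = (nilp_mat n * G) $$ (i,j)"
      using G \<open>i < _\<close> \<open>j < _\<close> by simp
  qed (use G in auto)
qed

definition toeplitz_mat :: "nat \<Rightarrow> (nat \<Rightarrow> 'a::zero) \<Rightarrow> 'a mat" where
  "toeplitz_mat n g = mat n n (\<lambda>(i,j). if i \<le> j then g (j - i) else 0)"

lemma toeplitz_mat_carrier [simp]: "toeplitz_mat n g \<in> carrier_mat n n"
  and dim_row_toeplitz_mat [simp]: "dim_row (toeplitz_mat n g) = n"
  and dim_col_toeplitz_mat [simp]: "dim_col (toeplitz_mat n g) = n"
  by (simp_all add: toeplitz_mat_def)

lemma index_toeplitz_mat [simp]:
  "i < n \<Longrightarrow> j < n \<Longrightarrow> toeplitz_mat n g $$ (i,j) = (if i \<le> j then g (j - i) else 0)"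
  by (simp add: toeplitz_mat_def)

lemma toeplitz_mat_cong: "(\<And>k. k < n \<Longrightarrow> g k = h k) \<Longrightarrow> toeplitz_mat n g = toeplitz_mat n h"
  by (rule eq_matI) auto

lemma smult_toeplitz_mat: "c \<cdot>\<^sub>m toeplitz_mat n g = toeplitz_mat n (\<lambda>k. c * g k :: 'a::mult_zero)"
  by (rule eq_matI) auto

lemma jordan_block_toeplitz:
  "jordan_block n lam = toeplitz_mat n (\<lambda>k. if k = 0 then lam else if k = 1 then 1 else 0)"
  by (rule eq_matI) auto

lemma commute_nilp_mat_imp_toeplitz:
  fixes G :: "'a::comm_ring_1 mat"
  assumes G: "G \<in> carrier_mat n n" and comm: "G * nilp_mat n = nilp_mat n * G"
  shows "G = toeplitz_mat n (\<lambda>k. G $$ (0,k))"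
proof -
  have shift: "G $$ (Suc i, j) = (if 0 < j then G $$ (i, j - 1) else 0)" if "Suc i < n" "j < n" for i j
    using arg_cong[OF comm, of "\<lambda>M. M $$ (i,j)"] that G
    by (simp del: index_mult_mat(1) add: mult_nilp_mat_index nilp_mat_mult_index)
  have "G $$ (i,j) = (if i \<le> j then G $$ (0, j - i) else 0)" if "i < n" "j < n" for i j
    using that
  proof (induction i arbitrary: j)
    case (Suc i)
    then show ?case by (auto simp: shift Suc.IH)
  qed simp
  then show ?thesis using G by (intro eq_matI) auto
qed

lemma toeplitz_mat_mult:
  fixes g h :: "nat \<Rightarrow> 'a::comm_ring_1"
  shows "toeplitz_mat n g * toeplitz_mat n h = toeplitz_mat n (\<lambda>m. \<Sum>k=0..m. g k * h (m - k))"
proof (rule eq_matI)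
  fix i j assume "i < dim_row (toeplitz_mat n (\<lambda>m. \<Sum>k=0..m. g k * h (m - k)))"
    "j < dim_col (toeplitz_mat n (\<lambda>m. \<Sum>k=0..m. g k * h (m - k)))"
  then have ij: "i < n" "j < n" by auto
  have "(toeplitz_mat n g * toeplitz_mat n h) $$ (i,j)
      = (\<Sum>k<n. toeplitz_mat n g $$ (i,k) * toeplitz_mat n h $$ (k,j))"
    using ij by (intro index_mult_mat_sum) auto
  also have "\<dots> = (\<Sum>k\<in>{i..j}. g (k - i) * h (j - k))"
    using ij by (intro sum.mono_neutral_cong_right) auto
  also have "\<dots> = (if i \<le> j then \<Sum>k=0..j - i. g k * h (j - i - k) else 0)"
    using sum.shift_bounds_cl_nat_ivl[of "\<lambda>k. g (k - i) * h (j - k)" 0 i "j - i"]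
    by (auto simp: add.commute)
  finally show "(toeplitz_mat n g * toeplitz_mat n h) $$ (i,j)
      = toeplitz_mat n (\<lambda>m. \<Sum>k=0..m. g k * h (m - k)) $$ (i,j)"
    using ij by simp
qed auto

lemma antidiag_transpose_toeplitz_mat:
  fixes g :: "nat \<Rightarrow> 'a::comm_ring_1"
  shows "antidiag_mat n * transpose_mat (toeplitz_mat n g) * antidiag_mat n = toeplitz_mat n g"
proof (rule eq_matI)
  fix i j assume "i < dim_row (toeplitz_mat n g)" "j < dim_col (toeplitz_mat n g)"
  then have ij: "i < n" "j < n" by auto
  have "(antidiag_mat n * transpose_mat (toeplitz_mat n g) * antidiag_mat n) $$ (i,j)
      = (antidiag_mat n * transpose_mat (toeplitz_mat n g)) $$ (i, n - 1 - j)"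
    using ij by (intro mult_antidiag_mat_index) auto
  also have "\<dots> = toeplitz_mat n g $$ (n - 1 - j, n - 1 - i)"
    using ij by (subst antidiag_mat_mult_index[of _ n n]) auto
  also have "\<dots> = toeplitz_mat n g $$ (i,j)"
    using ij by simp (use ij in linarith)
  finally show "(antidiag_mat n * transpose_mat (toeplitz_mat n g) * antidiag_mat n) $$ (i,j)
      = toeplitz_mat n g $$ (i,j)" .
qed auto

lemma nilp_mat_power: "nilp_mat n ^\<^sub>m l = (toeplitz_mat n (\<lambda>k. if k = l then 1 else 0) :: 'a::comm_ring_1 mat)"
proof (induction l)
  case 0
  then show ?case by (intro eq_matI) auto
next
  case (Suc l)
  then show ?case
    by (intro eq_matI) (auto simp del: index_mult_mat(1) simp: mult_nilp_mat_index[of _ n])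
qed

lemma toeplitz_mat_left_inverse_imp_nonzero:
  assumes "Y * toeplitz_mat n g = 1\<^sub>m n" "0 < n"
  shows "g 0 \<noteq> (0::'a::comm_ring_1)"
proof
  assume "g 0 = 0"
  then have "col (toeplitz_mat n g) 0 = 0\<^sub>v n" using assms(2) by (intro eq_vecI) auto
  then have "(Y * toeplitz_mat n g) $$ (0,0) = 0"
    using arg_cong[OF assms(1), of dim_row] assms(2) by (simp add: scalar_prod_def)
  then show False using assms by simp
qed

lemma phi_sum_eq_antidiag_mult_toeplitz:
  "phi_sum n lam = antidiag_mat n * toeplitz_mat n (\<lambda>l. sqrt_coeff l * inverse lam ^ l)"
proof (rule eq_matI)
  fix i j assume "i < dim_row (antidiag_mat n * toeplitz_mat n (\<lambda>l. sqrt_coeff l * inverse lam ^ l))"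
    "j < dim_col (antidiag_mat n * toeplitz_mat n (\<lambda>l. sqrt_coeff l * inverse lam ^ l))"
  then have ij: "i < n" "j < n" by auto
  have "phi_sum n lam $$ (i,j) = (\<Sum>l=0..n. if n - 1 - i \<le> j \<and> l = j - (n - 1 - i)
      then sqrt_coeff l * inverse lam ^ l else 0)"
    using ij by (auto simp del: index_mult_mat(1)
        simp: phi_sum_def antidiag_mat_mult_index[of _ n n] nilp_mat_power intro!: sum.cong)
  also have "\<dots> = (antidiag_mat n * toeplitz_mat n (\<lambda>l. sqrt_coeff l * inverse lam ^ l)) $$ (i,j)"
    using ij by (simp del: index_mult_mat(1) add: sum.delta antidiag_mat_mult_index[of _ n n])
  finally show "phi_sum n lam $$ (i,j) = \<dots>" .
qed (auto simp: phi_sum_def)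

lemma sqrt_coeff_gchoose: "sqrt_coeff l = ((1/2 :: 'a::field_char_0) gchoose l)"
  by (simp add: sqrt_coeff_def gbinomial_prod_rev atLeast0LessThan)

lemma sqrt_coeff_self_convolution:
  "(\<Sum>k=0..m. sqrt_coeff k * sqrt_coeff (m - k) :: 'a::field_char_0) = (if m \<le> 1 then 1 else 0)"
proof -
  have "(\<Sum>k=0..m. sqrt_coeff k * sqrt_coeff (m - k) :: 'a) = (1/2 + 1/2) gchoose m"
    unfolding sqrt_coeff_gchoose by (rule gbinomial_Vandermonde)
  also have "\<dots> = of_nat 1 gchoose m"
    by simp
  also have "\<dots> = of_nat (1 choose m)"
    by (simp only: binomial_gbinomial)
  finally show ?thesis by (cases m) auto
qed

lemma self_convolution_determines:
  fixes g h :: "nat \<Rightarrow> 'a::field_char_0"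
  assumes conv: "\<And>m. m < n \<Longrightarrow> (\<Sum>k=0..m. g k * g (m - k)) = (\<Sum>k=0..m. h k * h (m - k))"
    and "g 0 = h 0" "g 0 \<noteq> 0" "m < n"
  shows "g m = h m"
  using \<open>m < n\<close>
proof (induction m rule: less_induct)
  case (less m)
  show ?case
  proof (cases m)
    case 0
    then show ?thesis using assms by simp
  next
    case (Suc p)
    have split: "(\<Sum>k=0..m. f k * f (m - k)) = 2 * f 0 * f m + (\<Sum>k=1..<m. f k * f (m - k))"
      for f :: "nat \<Rightarrow> 'a"
    proof -
      have "{0..m} = insert 0 (insert m {1..<m})" using Suc by auto
      then show ?thesis using Suc by (simp add: algebra_simps)
    qed
    have "(\<Sum>k=1..<m. g k * g (m - k)) = (\<Sum>k=1..<m. h k * h (m - k))"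
      using less by (intro sum.cong) auto
    then show ?thesis
      using conv[OF less.prems] split[of g] split[of h] assms(2,3) by simp
  qed
qed

lemma toeplitz_mat_square_root_of_jordan_block:
  fixes g :: "nat \<Rightarrow> 'a::field_char_0"
  assumes "0 < n" "g 0 \<noteq> 0"
    and square: "toeplitz_mat n g * toeplitz_mat n g = c \<cdot>\<^sub>m jordan_block n lam"
  shows "g 0 * g 0 = c * lam"
    and "toeplitz_mat n g = g 0 \<cdot>\<^sub>m toeplitz_mat n (\<lambda>l. sqrt_coeff l * inverse lam ^ l)"
proof -
  define j :: "nat \<Rightarrow> 'a" where "j k = c * (if k = 0 then lam else if k = 1 then 1 else 0)" for k
  have conv_g: "(\<Sum>k=0..m. g k * g (m - k)) = j m" if "m < n" for m
    using arg_cong[OF square, of "\<lambda>M. M $$ (0,m)"] that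
    by (simp del: index_mult_mat(1) add: toeplitz_mat_mult jordan_block_toeplitz smult_toeplitz_mat j_def)
  show g0: "g 0 * g 0 = c * lam"
    using conv_g[OF \<open>0 < n\<close>] by (simp add: j_def)
  then have "lam \<noteq> 0" using \<open>g 0 \<noteq> 0\<close> by auto
  define t where "t = (\<lambda>l. g 0 * (sqrt_coeff l * inverse lam ^ l))"
  have conv_t: "(\<Sum>k=0..m. t k * t (m - k)) = j m" for m
  proof -
    have "(\<Sum>k=0..m. t k * t (m - k))
        = (\<Sum>k=0..m. g 0 * g 0 * inverse lam ^ m * (sqrt_coeff k * sqrt_coeff (m - k)))"
    proof (rule sum.cong)
      fix k assume "k \<in> {0..m}"
      then have "inverse lam ^ m = inverse lam ^ k * inverse lam ^ (m - k)"
        by (simp flip: power_add)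
      then show "t k * t (m - k) = g 0 * g 0 * inverse lam ^ m * (sqrt_coeff k * sqrt_coeff (m - k))"
        by (simp add: t_def ac_simps)
    qed simp
    also have "\<dots> = g 0 * g 0 * inverse lam ^ m * (if m \<le> 1 then 1 else 0)"
      by (simp add: sqrt_coeff_self_convolution flip: sum_distrib_left)
    also have "\<dots> = j m"
      using g0 \<open>lam \<noteq> 0\<close> by (auto simp: j_def le_Suc_eq)
    finally show ?thesis .
  qed
  have "toeplitz_mat n g = toeplitz_mat n t"
  proof (rule toeplitz_mat_cong)
    fix m assume "m < n"
    show "g m = t m"
    proof (rule self_convolution_determines[of n g t m])
      show "(\<Sum>k=0..m'. g k * g (m' - k)) = (\<Sum>k=0..m'. t k * t (m' - k))" if "m' < n" for m'
        using that by (simp only: conv_g conv_t)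
      show "g 0 = t 0" by (simp add: t_def sqrt_coeff_def)
    qed (use \<open>g 0 \<noteq> 0\<close> \<open>m < n\<close> in auto)
  qed
  then show "toeplitz_mat n g = g 0 \<cdot>\<^sub>m toeplitz_mat n (\<lambda>l. sqrt_coeff l * inverse lam ^ l)"
    by (simp add: smult_toeplitz_mat t_def)
qed

lemma commute_of_mult_eq_smult:
  fixes A B M :: "'a::field mat"
  assumes carriers: "A \<in> carrier_mat n n" "B \<in> carrier_mat n n" "M \<in> carrier_mat n n"
    and AB: "A * B = c \<cdot>\<^sub>m M" and BA: "B * A = c \<cdot>\<^sub>m M" and "c \<noteq> 0"
  shows "A * M = M * A"
proof -
  have "c \<cdot>\<^sub>m (A * M) = A * (B * A)"
    using carriers by (simp add: BA mult_smult_distrib[of _ n n _ n])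
  also have "\<dots> = c \<cdot>\<^sub>m (M * A)"
    using carriers by (simp add: AB mult_smult_assoc_mat[of _ n n _ n] flip: assoc_mult_mat[of _ n n _ n _ n])
  finally have "inverse c \<cdot>\<^sub>m (c \<cdot>\<^sub>m (A * M)) = inverse c \<cdot>\<^sub>m (c \<cdot>\<^sub>m (M * A))"
    by simp
  then show ?thesis using \<open>c \<noteq> 0\<close> by (simp add: smult_smult_mat one_smult_mat)
qed

lemma inverse_of_congruent:
  fixes A :: "'a::comm_ring_1 mat"
  assumes carriers: "A \<in> carrier_mat n n" "Ai \<in> carrier_mat n n" "M \<in> carrier_mat n n"
      "Mi \<in> carrier_mat n n" "C \<in> carrier_mat n n"
    and inverses: "A * Ai = 1\<^sub>m n" "M * Mi = 1\<^sub>m n" "C * C = 1\<^sub>m n" "c * c = 1"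
    and congr: "transpose_mat M * A * M = c \<cdot>\<^sub>m C"
  shows "Ai = c \<cdot>\<^sub>m (M * C * transpose_mat M)"
proof -
  note square_rules = assoc_mult_mat[of _ n n _ n _ n] mult_smult_assoc_mat[of _ n n _ n]
    mult_smult_distrib[of _ n n _ n]
  have "transpose_mat M * A = (transpose_mat M * A * M) * Mi"
    using carriers inverses by (simp add: square_rules)
  also have "\<dots> = c \<cdot>\<^sub>m (C * Mi)"
    using carriers by (simp only: congr square_rules)
  finally have MA: "transpose_mat M * A = c \<cdot>\<^sub>m (C * Mi)" .
  let ?X = "c \<cdot>\<^sub>m (M * C * transpose_mat M)"
  have "?X * A = c \<cdot>\<^sub>m (M * (C * (transpose_mat M * A)))"
    using carriers by (simp add: square_rules)
  also have "\<dots> = 1\<^sub>m n"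
    using carriers inverses
    by (simp add: MA square_rules smult_smult_mat one_smult_mat flip: assoc_mult_mat[of C n n C n Mi n])
  finally have XA: "?X * A = 1\<^sub>m n" .
  have "Ai = ?X * A * Ai"
    using carriers by (simp only: XA left_mult_one_mat)
  also have "\<dots> = ?X"
    using carriers inverses by (subst assoc_mult_mat[of _ n n _ n _ n]) auto
  finally show ?thesis .
qed

lemma basis_change_congruences:
  fixes B0 :: "'a::comm_ring_1 mat"
  assumes carriers: "B0 \<in> carrier_mat n n" "B1 \<in> carrier_mat n n" "B0i \<in> carrier_mat n n"
      "B1i \<in> carrier_mat n n" "E \<in> carrier_mat n n" "Ei \<in> carrier_mat n n"
      "P \<in> carrier_mat n n" "Q \<in> carrier_mat n n" "C \<in> carrier_mat n n" "J \<in> carrier_mat n n"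
    and inverses: "B0 * B0i = 1\<^sub>m n" "B1i * B1 = 1\<^sub>m n" "E * Ei = 1\<^sub>m n" "P * Q = 1\<^sub>m n"
      "C * C = 1\<^sub>m n" "eps * eps = 1" "eta * eta = 1"
    and f_matrix: "E * J = B0i * B1 * E"
    and b0_matrix: "transpose_mat E * B0 * E = eps \<cdot>\<^sub>m C"
    and b1_dual_matrix: "Q * B1i * transpose_mat Q = eta \<cdot>\<^sub>m C"
    and b0_dual_matrix: "Q * B0i * transpose_mat Q = eta \<cdot>\<^sub>m (C * J)"
  shows "Q * E * C * transpose_mat (Q * E) = (eps * eta) \<cdot>\<^sub>m (C * J)"
    and "transpose_mat (Q * E) * C * (Q * E) = (eps * eta) \<cdot>\<^sub>m (C * J)"
proof -
  note square_rules = assoc_mult_mat[of _ n n _ n _ n] mult_smult_assoc_mat[of _ n n _ n]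
    mult_smult_distrib[of _ n n _ n] transpose_mult[of _ n n _ n] smult_smult_mat
  have "B0i = eps \<cdot>\<^sub>m (E * C * transpose_mat E)"
    using carriers inverses b0_matrix by (intro inverse_of_congruent) auto
  then have ECE: "E * C * transpose_mat E = eps \<cdot>\<^sub>m B0i"
    using inverses by (simp add: smult_smult_mat one_smult_mat)
  have "transpose_mat Q * transpose_mat P = 1\<^sub>m n"
    using carriers inverses by (simp flip: transpose_mult)
  then have B1: "B1 = eta \<cdot>\<^sub>m (transpose_mat Q * C * Q)"
    using carriers inverses b1_dual_matrix
      inverse_of_congruent[of B1i n B1 "transpose_mat Q" "transpose_mat P" C eta] by simp
  have "Q * E * C * transpose_mat (Q * E) = Q * (E * C * transpose_mat E) * transpose_mat Q"
    using carriers by (simp add: square_rules)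
  also have "\<dots> = eps \<cdot>\<^sub>m (Q * B0i * transpose_mat Q)"
    using carriers by (simp add: ECE square_rules)
  finally show "Q * E * C * transpose_mat (Q * E) = (eps * eta) \<cdot>\<^sub>m (C * J)"
    by (simp add: b0_dual_matrix smult_smult_mat)
  have "eta \<cdot>\<^sub>m (transpose_mat (Q * E) * C * (Q * E)) = transpose_mat E * B1 * E"
    using carriers by (simp add: B1 square_rules)
  also have "\<dots> = transpose_mat E * B0 * (B0i * B1 * E)"
    using carriers inverses by (simp add: square_rules flip: assoc_mult_mat[of B0 n n B0i n _ n])
  also have "\<dots> = (transpose_mat E * B0 * E) * J"
    using carriers by (simp add: square_rules flip: f_matrix)
  also have "\<dots> = eps \<cdot>\<^sub>m (C * J)"
    unfolding b0_matrix using carriers by (simp add: square_rules)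
  finally have "eta \<cdot>\<^sub>m (eta \<cdot>\<^sub>m (transpose_mat (Q * E) * C * (Q * E))) = eta \<cdot>\<^sub>m (eps \<cdot>\<^sub>m (C * J))"
    by simp
  then show "transpose_mat (Q * E) * C * (Q * E) = (eps * eta) \<cdot>\<^sub>m (C * J)"
    using inverses by (simp add: smult_smult_mat one_smult_mat mult.commute)
qed

lemma antidiag_congruences_imp_phi_sum:
  fixes Phi :: "'a::field_char_0 mat"
  assumes "0 < n" and carriers: "Phi \<in> carrier_mat n n" "Y \<in> carrier_mat n n"
    and "Y * Phi = 1\<^sub>m n" "c \<noteq> 0"
    and congr1: "Phi * antidiag_mat n * transpose_mat Phi = c \<cdot>\<^sub>m (antidiag_mat n * jordan_block n lam)"
    and congr2: "transpose_mat Phi * antidiag_mat n * Phi = c \<cdot>\<^sub>m (antidiag_mat n * jordan_block n lam)"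
  shows "\<exists>s. s \<noteq> 0 \<and> s\<^sup>2 = c * lam \<and> Phi = s \<cdot>\<^sub>m phi_sum n lam"
proof -
  let ?C = "antidiag_mat n :: 'a mat" and ?J = "jordan_block n lam"
  note square_rules = assoc_mult_mat[of _ n n _ n _ n] mult_smult_distrib[of _ n n _ n]
    mult_carrier_mat[of _ n n _ n]
  have CC: "?C * (?C * M) = M" if "M \<in> carrier_mat n n" for M
    using that by (simp add: antidiag_mat_squared flip: assoc_mult_mat[of _ n n _ n _ n])
  define G where "G = ?C * Phi"
  have G: "G \<in> carrier_mat n n" and Phi_eq: "Phi = ?C * G"
    using carriers by (auto simp: G_def CC)
  have "G * (?C * transpose_mat Phi) = ?C * (Phi * ?C * transpose_mat Phi)"
    using carriers by (simp add: G_def square_rules)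
  also have "\<dots> = c \<cdot>\<^sub>m ?J"
    unfolding congr1 by (simp add: square_rules CC)
  finally have GH: "G * (?C * transpose_mat Phi) = c \<cdot>\<^sub>m ?J" .
  have "(?C * transpose_mat Phi) * G = ?C * (transpose_mat Phi * ?C * Phi)"
    using carriers by (simp add: G_def square_rules CC)
  also have "\<dots> = c \<cdot>\<^sub>m ?J"
    unfolding congr2 by (simp add: square_rules CC)
  finally have HG: "(?C * transpose_mat Phi) * G = c \<cdot>\<^sub>m ?J" .
  have "G * ?J = ?J * G"
    using G carriers GH HG \<open>c \<noteq> 0\<close> by (intro commute_of_mult_eq_smult) auto
  then have "G * nilp_mat n = nilp_mat n * G"
    using G by (rule commute_jordan_block_imp_commute_nilp_mat[rotated])
  then obtain g where G_toeplitz: "G = toeplitz_mat n g"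
    using commute_nilp_mat_imp_toeplitz[OF G] by blast
  have "?C * transpose_mat Phi = G"
    using G by (simp add: Phi_eq G_toeplitz transpose_mult[of _ n n _ n] transpose_antidiag_mat
        antidiag_transpose_toeplitz_mat flip: assoc_mult_mat[of _ n n _ n _ n])
  then have square_g: "toeplitz_mat n g * toeplitz_mat n g = c \<cdot>\<^sub>m ?J"
    using HG G_toeplitz by simp
  have "(Y * ?C) * toeplitz_mat n g = 1\<^sub>m n"
    using carriers \<open>Y * Phi = 1\<^sub>m n\<close> by (simp add: G_toeplitz[symmetric] G_def square_rules CC)
  then have "g 0 \<noteq> 0"
    using \<open>0 < n\<close> by (rule toeplitz_mat_left_inverse_imp_nonzero)
  note g = toeplitz_mat_square_root_of_jordan_block[OF \<open>0 < n\<close> this square_g]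
  have "Phi = g 0 \<cdot>\<^sub>m phi_sum n lam"
    by (simp add: Phi_eq G_toeplitz g(2) phi_sum_eq_antidiag_mult_toeplitz mult_smult_distrib[of _ n n _ n])
  then show ?thesis
    using g(1) \<open>g 0 \<noteq> 0\<close> by (intro exI[of _ "g 0"]) (simp add: power2_eq_square)
qed

lemma A10_hyps_imp_phi_sum:
  fixes B0 :: "'a::field_char_0 mat"
  assumes hyps: "A10_hyps n B0 B1 B0i B1i E P Q Phi eps eta lam"
    and signs: "eps * eps = 1" "eta * eta = 1"
  shows "\<exists>s. s \<noteq> 0 \<and> s\<^sup>2 = eps * eta * lam \<and> Phi = s \<cdot>\<^sub>m phi_sum n lam"
proof -
  have "0 < n"
    and carriers: "B0 \<in> carrier_mat n n" "B1 \<in> carrier_mat n n" "B0i \<in> carrier_mat n n"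
      "B1i \<in> carrier_mat n n" "E \<in> carrier_mat n n" "P \<in> carrier_mat n n" "Q \<in> carrier_mat n n"
      "Phi \<in> carrier_mat n n"
    and inverses: "B0 * B0i = 1\<^sub>m n" "B1i * B1 = 1\<^sub>m n" "P * Q = 1\<^sub>m n" "Q * P = 1\<^sub>m n"
    and "invertible_mat E"
    and matrices: "E * jordan_block n lam = B0i * B1 * E"
      "transpose_mat E * B0 * E = eps \<cdot>\<^sub>m antidiag_mat n"
      "Q * B1i * transpose_mat Q = eta \<cdot>\<^sub>m antidiag_mat n"
      "Q * B0i * transpose_mat Q = eta \<cdot>\<^sub>m (antidiag_mat n * jordan_block n lam)"
    and "E = P * Phi"
    using hyps unfolding A10_hyps_def by blast+
  obtain Ei where Ei: "Ei \<in> carrier_mat n n" "E * Ei = 1\<^sub>m n" "Ei * E = 1\<^sub>m n"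
    using \<open>invertible_mat E\<close> carriers(5) by (rule invertible_matE)
  have Phi: "Phi = Q * E"
    using carriers inverses \<open>E = P * Phi\<close> by (simp flip: assoc_mult_mat[of Q n n P n Phi n])
  have "Ei * P * Phi = Ei * (P * Q) * E"
    using carriers Ei by (simp add: Phi assoc_mult_mat[of _ n n _ n _ n] mult_carrier_mat[of _ n n _ n])
  then have "Ei * P * Phi = 1\<^sub>m n"
    using carriers inverses Ei by simp
  moreover have "Phi * antidiag_mat n * transpose_mat Phi
      = (eps * eta) \<cdot>\<^sub>m (antidiag_mat n * jordan_block n lam)"
    and "transpose_mat Phi * antidiag_mat n * Phi
      = (eps * eta) \<cdot>\<^sub>m (antidiag_mat n * jordan_block n lam)"
    unfolding Phi using carriers inverses Ei signs matrices
    by (intro basis_change_congruences[of B0 n B1 B0i B1i E Ei P Q]; simp add: antidiag_mat_squared)+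
  moreover have "eps * eta \<noteq> 0"
    using signs by auto
  ultimately show ?thesis
    using \<open>0 < n\<close> carriers Ei by (intro antidiag_congruences_imp_phi_sum[of n Phi "Ei * P"]) auto
qed

theorem lemmaA10:
  shows
  "(\<forall>n (B0::real mat) B1 B0i B1i E P Q Phi eps eta lam.
      A10_hyps n B0 B1 B0i B1i E P Q Phi eps eta lam \<longrightarrow> eps \<in> {1, -1} \<longrightarrow> eta \<in> {1, -1} \<longrightarrow>
      eps * eta * lam > 0 \<and>
      (\<exists>s. s ^ 2 = eps * eta * lam \<and> Phi = s \<cdot>\<^sub>m phi_sum n lam))
   \<and>
   (\<forall>n (B0::complex mat) B1 B0i B1i E P Q Phi eps eta lam.
      A10_hyps n B0 B1 B0i B1i E P Q Phi eps eta lam \<longrightarrow> eps = 1 \<longrightarrow> eta = 1 \<longrightarrow>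
      (\<exists>s. s ^ 2 = eps * eta * lam \<and> Phi = s \<cdot>\<^sub>m phi_sum n lam))"
proof (intro conjI; intro allI impI)
  fix n and B0 :: "real mat" and B1 B0i B1i E P Q Phi eps eta lam
  assume hyps: "A10_hyps n B0 B1 B0i B1i E P Q Phi eps eta lam" and "eps \<in> {1, -1}" "eta \<in> {1, -1}"
  then have "eps * eps = 1" "eta * eta = 1" by auto
  then obtain s where s: "s \<noteq> 0" "s\<^sup>2 = eps * eta * lam" "Phi = s \<cdot>\<^sub>m phi_sum n lam"
    using A10_hyps_imp_phi_sum[OF hyps] by blast
  then show "eps * eta * lam > 0 \<and> (\<exists>s. s ^ 2 = eps * eta * lam \<and> Phi = s \<cdot>\<^sub>m phi_sum n lam)"
    using zero_less_power2[of s] by auto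
next
  fix n and B0 :: "complex mat" and B1 B0i B1i E P Q Phi eps eta lam
  assume hyps: "A10_hyps n B0 B1 B0i B1i E P Q Phi eps eta lam" and "eps = 1" "eta = 1"
  then show "\<exists>s. s ^ 2 = eps * eta * lam \<and> Phi = s \<cdot>\<^sub>m phi_sum n lam"
    using A10_hyps_imp_phi_sum[OF hyps] by auto
qed

end
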